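(* Let $n\ge 2$ be odd. Then there exists a matching mechanism that is resolute and symmetric (i.e. $G^*$-symmetric).
   Context: Fix $n\ge 2$, $W=\{1,\dots,n\}$ (women), $M=\{n+1,\dots,2n\}$ (men), $I=W\cup M$. Permutations compose right-to-left. A preference profile is a function $p$ on $I$ assigning to each $x\in W$ a linear order $p(x)$ on $M$ and to each $y\in M$ a linear order $p(y)$ on $W$; $\mathcal{P}$ is the set of preference profiles. A matching is a permutation $\mu$ of $I$ with $\mu(W)=M$, $\mu(M)=W$ and $\mu(\mu(z))=z$ for all $z\in I$; $\mathcal{M}$ is the set of matchings. Let $G^*=\{\varphi\in\mathrm{Sym}(I):\{\varphi(W),\varphi(M)\}=\{W,M\}\}$. For a linear order $R$ on $X\subseteq I$ and $\varphi\in\mathrm{Sym}(I)$, $\varphi R$ is the relation on $\varphi(X)$ with $(a,b)\in\varphi R$ iff $(\varphi^{-1}(a),\varphi^{-1}(b))\in R$. For $p\in\mathcal{P}$ and $\varphi\in G^*$, $p^\varphi\in\mathcal{P}$ is defined by $p^\varphi(z)=\varphi\,p(\varphi^{-1}(z))$. For a permutation $\mu$, $\mu^\varphi=\varphi\mu\varphi^{-1}$, and for a set $S$ of permutations $S^\varphi=\{\mu^\varphi:\mu\in S\}$. A matching mechanism is a correspondence $F$ from $\mathcal{P}$ to $\mathcal{M}$. $F$ is resolute if $|F(p)|=1$ for all $p$. For $U\subseteq G^*$, $F$ is $U$-symmetric if $F(p^\varphi)=F(p)^\varphi$ for all $p\in\mathcal{P}$, $\varphi\in U$; symmetric means $G^*$-symmetric.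 *)

theory Defs
  imports "HOL-Combinatorics.Permutations"
begin

definition women :: "nat \<Rightarrow> nat set" where "women n = {1..n}"
definition men :: "nat \<Rightarrow> nat set" where "men n = {n+1..2*n}"
definition agents :: "nat \<Rightarrow> nat set" where "agents n = women n \<union> men n"

text \<open>A preference profile assigns to each agent a (reflexive) linear order, given as a
  relation, on the opposite side; outside I it is empty (so profiles are determined by
  their values on I).\<close>
type_synonym profile = "nat \<Rightarrow> (nat \<times> nat) set"

definition profiles :: "nat \<Rightarrow> profile set" where
  "profiles n = {p. (\<forall>x\<in>women n. linear_order_on (men n) (p x))
                  \<and> (\<forall>y\<in>men n. linear_order_on (women n) (p y))
                  \<and> (\<forall>z. z \<notin> agents n \<longrightarrow> p z = {})}"

definition matchings :: "nat \<Rightarrow> (nat \<Rightarrow> nat) set" where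
  "matchings n = {\<mu>. \<mu> permutes agents n \<and> \<mu> ` women n = men n \<and> \<mu> ` men n = women n
                     \<and> (\<forall>z\<in>agents n. \<mu> (\<mu> z) = z)}"

definition Gstar :: "nat \<Rightarrow> (nat \<Rightarrow> nat) set" where
  "Gstar n = {\<phi>. \<phi> permutes agents n \<and> {\<phi> ` women n, \<phi> ` men n} = {women n, men n}}"

definition rel_act :: "(nat \<Rightarrow> nat) \<Rightarrow> (nat \<times> nat) set \<Rightarrow> (nat \<times> nat) set" where
  "rel_act \<phi> R = {(a, b). (inv \<phi> a, inv \<phi> b) \<in> R}"

definition profile_act :: "(nat \<Rightarrow> nat) \<Rightarrow> profile \<Rightarrow> profile" where
  "profile_act \<phi> p = (\<lambda>z. rel_act \<phi> (p (inv \<phi> z)))"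

definition perm_conj :: "(nat \<Rightarrow> nat) \<Rightarrow> (nat \<Rightarrow> nat) \<Rightarrow> (nat \<Rightarrow> nat)" where
  "perm_conj \<phi> \<mu> = \<phi> \<circ> \<mu> \<circ> inv \<phi>"

definition mechanism :: "nat \<Rightarrow> (profile \<Rightarrow> (nat \<Rightarrow> nat) set) \<Rightarrow> bool" where
  "mechanism n F \<longleftrightarrow> (\<forall>p\<in>profiles n. F p \<subseteq> matchings n)"

definition resolute :: "nat \<Rightarrow> (profile \<Rightarrow> (nat \<Rightarrow> nat) set) \<Rightarrow> bool" where
  "resolute n F \<longleftrightarrow> (\<forall>p\<in>profiles n. card (F p) = 1)"

definition U_symmetric :: "nat \<Rightarrow> (nat \<Rightarrow> nat) set \<Rightarrow> (profile \<Rightarrow> (nat \<Rightarrow> nat) set) \<Rightarrow> bool" where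
  "U_symmetric n U F \<longleftrightarrow>
     (\<forall>p\<in>profiles n. \<forall>\<phi>\<in>U. F (profile_act \<phi> p) = perm_conj \<phi> ` F p)"

definition symmetric_mech :: "nat \<Rightarrow> (profile \<Rightarrow> (nat \<Rightarrow> nat) set) \<Rightarrow> bool" where
  "symmetric_mech n F \<longleftrightarrow> U_symmetric n (Gstar n) F"

end

(*
  The stabiliser of a profile in G* acts freely on the agents: an element fixing an agent
  is an automorphism of that agent's finite linear order, hence fixes the other side
  pointwise, and then also the first side. Choosing orbit representatives, a resolute
  symmetric mechanism exists once every profile has a matching invariant under its
  stabiliser. Such a matching is assembled from orbits of single edges {a, b} such that
  every stabiliser element sending a to b sends b back to a. If the stabiliser preserves
  the sides, any man b will do. Otherwise, n being odd, it contains a side-swapping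
  involution c (a side-preserving involution other than the identity would pair off the n
  women without fixed points), and b = c a will do.
*)
theory Submission
  imports Defs "HOL-Combinatorics.Cycles"
begin

lemma linear_order_on_automorphism_fixes:
  assumes "finite A" and lin: "linear_order_on A R" and "f ` A = A"
    and pres: "\<And>a b. a \<in> A \<Longrightarrow> b \<in> A \<Longrightarrow> (f a, f b) \<in> R \<longleftrightarrow> (a, b) \<in> R"
    and "a \<in> A"
  shows "f a = a"
proof -
  have "finite R"
    using lin \<open>finite A\<close> finite_subset[of R "A \<times> A"] by (auto simp: order_on_defs)
  then have "well_order_on A R"
    using lin linear_order_on_well_order_on by blast
  then have A: "A = Field R" and wo: "Well_order R"
    using well_order_on_Well_order by blast+
  have "bij_betw f A A"
    using \<open>finite A\<close> \<open>f ` A = A\<close> by (simp add: bij_betw_def eq_card_imp_inj_on)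
  then have "iso R R f"
    using pres by (simp add: iso_iff2 A[symmetric])
  then have "embed R R f"
    by (simp add: iso_def)
  then have "f a = id a"
    using embed_unique[OF wo wo _ id_embed] \<open>a \<in> A\<close> A by blast
  then show ?thesis by simp
qed

lemma even_card_if_fixpoint_free_involution:
  assumes "finite A" and f: "\<And>x. x \<in> A \<Longrightarrow> f x \<in> A \<and> f (f x) = x \<and> f x \<noteq> x"
  shows "even (card A)"
proof -
  define C where "C = (\<lambda>x. {x, f x}) ` A"
  have pair: "c = {z, f z}" if "c \<in> C" "z \<in> c" for c z
    using that f unfolding C_def by auto
  have "card {x, f x} = 2" if "x \<in> A" for x
    using f[OF that] by (metis card_2_iff)
  then have "\<forall>c\<in>C. card c = 2"
    unfolding C_def by blast
  moreover have "\<Union>C = A" "finite C"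
    using f \<open>finite A\<close> unfolding C_def by auto
  moreover have "\<forall>c1\<in>C. \<forall>c2\<in>C. c1 \<noteq> c2 \<longrightarrow> c1 \<inter> c2 = {}"
    using pair by blast
  ultimately have "2 * card C = card A"
    using card_partition[of C 2] \<open>finite A\<close> by simp
  then show ?thesis by presburger
qed

lemma funpow_image_swap:
  assumes "f ` A = B" and "f ` B = A"
  shows "(f ^^ k) ` A = (if even k then A else B)"
proof (induction k)
  case (Suc k)
  have "(f ^^ Suc k) ` A = f ` ((f ^^ k) ` A)"
    by (simp add: image_comp)
  then show ?case
    using Suc assms by simp
qed simp

section \<open>Equivariant maps\<close>

locale perm_group =
  fixes G :: "('a \<Rightarrow> 'a) set"
  assumes id_mem [simp]: "id \<in> G"
    and comp_mem: "g \<in> G \<Longrightarrow> h \<in> G \<Longrightarrow> g \<circ> h \<in> G"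
    and inv_mem: "g \<in> G \<Longrightarrow> inv g \<in> G"
    and bij_mem: "g \<in> G \<Longrightarrow> bij g"
begin

lemma inv_cancel [simp]:
  assumes "g \<in> G"
  shows "g (inv g x) = x" "inv g (g x) = x" "g \<circ> inv g = id" "inv g \<circ> g = id"
  using bij_mem[OF assms]
  by (simp_all add: bij_is_inj bij_is_surj surj_f_inv_f surj_iff[symmetric] inj_iff[symmetric])

lemma funpow_mem: "g \<in> G \<Longrightarrow> g ^^ k \<in> G"
  by (induction k) (simp_all add: comp_mem)

end

locale perm_group_action = perm_group G for G :: "('a \<Rightarrow> 'a) set" +
  fixes act :: "('a \<Rightarrow> 'a) \<Rightarrow> 'b \<Rightarrow> 'b"
  assumes act_id [simp]: "act id x = x"
    and act_comp: "g \<in> G \<Longrightarrow> h \<in> G \<Longrightarrow> act (g \<circ> h) x = act g (act h x)"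
begin

lemma act_inv_act [simp]: "g \<in> G \<Longrightarrow> act (inv g) (act g x) = x"
  using act_comp[OF inv_mem, of g g x] by simp

lemma perm_group_stabilizer: "perm_group {g \<in> G. act g x = x}"
proof
  fix g assume "g \<in> {g \<in> G. act g x = x}"
  then show "inv g \<in> {g \<in> G. act g x = x}"
    using act_inv_act[of g x] by (simp add: inv_mem)
qed (auto simp: comp_mem act_comp bij_mem)

lemma orbit_representatives:
  obtains rep tr where "\<And>g x. g \<in> G \<Longrightarrow> rep (act g x) = rep x"
    and "\<And>x. tr x \<in> G" and "\<And>x. act (tr x) (rep x) = x"
proof -
  define orbit where "orbit x = (\<lambda>g. act g x) ` G" for x
  define rep where "rep x = (SOME z. z \<in> orbit x)" for x
  define tr where "tr x = (SOME g. g \<in> G \<and> act g (rep x) = x)" for x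
  have "orbit (act g x) = orbit x" if "g \<in> G" for g x
  proof
    show "orbit (act g x) \<subseteq> orbit x"
    proof
      fix y assume "y \<in> orbit (act g x)"
      then obtain h where "h \<in> G" "y = act (h \<circ> g) x"
        using act_comp \<open>g \<in> G\<close> by (auto simp: orbit_def)
      then show "y \<in> orbit x"
        unfolding orbit_def using comp_mem \<open>g \<in> G\<close> by blast
    qed
    show "orbit x \<subseteq> orbit (act g x)"
    proof
      fix y assume "y \<in> orbit x"
      then obtain h where "h \<in> G" "y = act (h \<circ> inv g) (act g x)"
        using act_comp inv_mem \<open>g \<in> G\<close> by (auto simp: orbit_def)
      then show "y \<in> orbit (act g x)"
        unfolding orbit_def using comp_mem inv_mem \<open>g \<in> G\<close> by blast
    qed
  qed
  then have "rep (act g x) = rep x" if "g \<in> G" for g x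
    using that by (simp add: rep_def)
  moreover have "tr x \<in> G \<and> act (tr x) (rep x) = x" for x
  proof -
    have "x \<in> orbit x"
      unfolding orbit_def by (metis act_id id_mem image_eqI)
    then have "rep x \<in> orbit x"
      unfolding rep_def by (rule someI)
    then obtain g where "g \<in> G" "rep x = act g x"
      by (auto simp: orbit_def)
    then have "inv g \<in> G \<and> act (inv g) (rep x) = x"
      by (simp add: inv_mem)
    then show ?thesis
      unfolding tr_def by (rule someI[where P = "\<lambda>g. g \<in> G \<and> act g (rep x) = x"])
  qed
  ultimately show ?thesis
    using that by blast
qed

text \<open>Pick a representative in every orbit of \<open>P\<close> and transport the point of \<open>Q\<close> chosen for it.\<close>

lemma equivariant_map_exists:
  assumes act': "perm_group_action G act'"
    and act_closed: "\<And>g x. g \<in> G \<Longrightarrow> x \<in> P \<Longrightarrow> act g x \<in> P"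
    and act'_closed: "\<And>g y. g \<in> G \<Longrightarrow> y \<in> Q \<Longrightarrow> act' g y \<in> Q"
    and fixed: "\<And>x. x \<in> P \<Longrightarrow> \<exists>y\<in>Q. \<forall>g\<in>G. act g x = x \<longrightarrow> act' g y = y"
  shows "\<exists>f. \<forall>x\<in>P. f x \<in> Q \<and> (\<forall>g\<in>G. f (act g x) = act' g (f x))"
proof -
  interpret Q: perm_group_action G act'
    by (rule act')
  obtain rep tr where rep: "\<And>g x. g \<in> G \<Longrightarrow> rep (act g x) = rep x"
    and tr: "\<And>x. tr x \<in> G" "\<And>x. act (tr x) (rep x) = x"
    using orbit_representatives by blast
  define cand where "cand z = (SOME y. y \<in> Q \<and> (\<forall>g\<in>G. act g z = z \<longrightarrow> act' g y = y))" for z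
  have cand: "cand z \<in> Q \<and> (\<forall>g\<in>G. act g z = z \<longrightarrow> act' g (cand z) = cand z)" if "z \<in> P" for z
    using fixed[OF that] unfolding cand_def by (rule someI2_bex)
  have rep_mem: "rep x \<in> P" if "x \<in> P" for x
    using act_closed[OF inv_mem[OF tr(1)[of x]] that] act_inv_act[OF tr(1)[of x], of "rep x"] tr(2)[of x]
    by simp
  show ?thesis
  proof (intro exI ballI conjI)
    fix x assume "x \<in> P"
    then show "act' (tr x) (cand (rep x)) \<in> Q"
      using tr cand rep_mem act'_closed by blast
    fix g assume "g \<in> G"
    define h where "h = tr (act g x)"
    have h: "h \<in> G" "act h (rep x) = act g x"
      using tr[of "act g x"] rep[OF \<open>g \<in> G\<close>] by (simp_all add: h_def)
    have "act (inv h \<circ> g \<circ> tr x) (rep x) = act (inv h) (act h (rep x))"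
      using tr h \<open>g \<in> G\<close> by (simp add: act_comp comp_mem inv_mem)
    then have "act (inv h \<circ> g \<circ> tr x) (rep x) = rep x"
      using h(1) by simp
    then have "act' (inv h \<circ> g \<circ> tr x) (cand (rep x)) = cand (rep x)"
      using cand[OF rep_mem[OF \<open>x \<in> P\<close>]] h(1) tr(1) \<open>g \<in> G\<close> by (simp add: comp_mem inv_mem)
    then have "act' h (cand (rep x)) = act' (h \<circ> (inv h \<circ> g \<circ> tr x)) (cand (rep x))"
      using h(1) tr(1) \<open>g \<in> G\<close> by (simp add: Q.act_comp comp_mem inv_mem)
    also have "h \<circ> (inv h \<circ> g \<circ> tr x) = g \<circ> tr x"
      using h(1) by (simp add: o_assoc)
    also have "act' (g \<circ> tr x) (cand (rep x)) = act' g (act' (tr x) (cand (rep x)))"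
      using \<open>g \<in> G\<close> tr(1) by (rule Q.act_comp)
    finally show "act' (tr (act g x)) (cand (rep (act g x))) = act' g (act' (tr x) (cand (rep x)))"
      using rep[OF \<open>g \<in> G\<close>] by (simp add: h_def)
  qed
qed

end

section \<open>Invariant matchings under free actions\<close>

locale free_bipartite_action = perm_group G for G :: "('a \<Rightarrow> 'a) set" +
  fixes W M :: "'a set"
  assumes finite_W: "finite W" and finite_M: "finite M"
    and disjoint_sides: "W \<inter> M = {}"
    and permutes_sides: "g \<in> G \<Longrightarrow> g permutes (W \<union> M)"
    and preserves_or_swaps: "g \<in> G \<Longrightarrow> (g ` W = W \<and> g ` M = M) \<or> (g ` W = M \<and> g ` M = W)"
    and free: "g \<in> G \<Longrightarrow> x \<in> W \<union> M \<Longrightarrow> g x = x \<Longrightarrow> g = id"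
begin

lemma eq_if_agree:
  assumes "g \<in> G" "h \<in> G" "x \<in> W \<union> M" "g x = h x"
  shows "g = h"
proof -
  have "(inv h \<circ> g) x = x"
    using assms by simp
  then have "inv h \<circ> g = id"
    using free assms by (simp add: comp_mem inv_mem)
  then have "h \<circ> (inv h \<circ> g) = h"
    by simp
  then show ?thesis
    using assms(2) by (simp add: o_assoc)
qed

lemma side_preserving_involution_eq_id:
  assumes "odd (card W)" "r \<in> G" "r ` W = W" "r \<circ> r = id"
  shows "r = id"
proof (rule ccontr)
  assume "r \<noteq> id"
  then have "r x \<in> W \<and> r (r x) = x \<and> r x \<noteq> x" if "x \<in> W" for x
    using that assms(2-4) free[of r x] pointfree_idE[OF assms(4)] by blast
  then have "even (card W)"
    using even_card_if_fixpoint_free_involution finite_W by blast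
  then show False
    using assms(1) by simp
qed

lemma side_preserving_odd_order:
  assumes "odd (card W)" "s \<in> G" "s ` W = W"
  shows "\<exists>l. odd l \<and> s ^^ l = id"
proof -
  have "permutation s"
    using permutes_sides[OF assms(2)] finite_W finite_M permutation_permutes by blast
  then obtain k where "s ^^ k = id" "k > 0"
    by (rule permutation_is_nilpotent)
  then show ?thesis
  proof (induction k rule: less_induct)
    case (less k)
    show ?case
    proof (cases "odd k")
      case False
      then obtain j where j: "k = j + j"
        by (metis evenE mult_2)
      have "s ^^ j \<in> G" "(s ^^ j) ` W = W"
        using funpow_mem[OF assms(2)] funpow_image_swap[OF assms(3) assms(3)] by simp_all
      moreover have "(s ^^ j) \<circ> (s ^^ j) = id"
        using less.prems(1) j by (metis funpow_add)
      ultimately have "s ^^ j = id"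
        using side_preserving_involution_eq_id assms(1) by blast
      moreover have "j < k" "0 < j"
        using less.prems(2) j by simp_all
      ultimately show ?thesis
        using less.IH by blast
    qed (use less.prems in blast)
  qed
qed

lemma swap_involution_exists:
  assumes "odd (card W)" "\<psi> \<in> G" "\<psi> ` W = M"
  shows "\<exists>c\<in>G. c \<circ> c = id \<and> c ` W = M \<and> c ` M = W"
proof -
  have "W \<noteq> M"
    using assms(1) disjoint_sides by (metis card.empty even_zero inf.idem)
  then have \<psi>M: "\<psi> ` M = W"
    using preserves_or_swaps[OF assms(2)] assms(3) by auto
  have "(\<psi> \<circ> \<psi>) ` W = W"
    using assms(3) \<psi>M by (metis image_comp)
  then obtain l where l: "odd l" "(\<psi> \<circ> \<psi>) ^^ l = id"
    using side_preserving_odd_order assms(1,2) comp_mem by blast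
  have "\<psi> ^^ l \<circ> \<psi> ^^ l = \<psi> ^^ (2 * l)"
    by (simp add: funpow_add[symmetric] mult_2)
  also have "\<dots> = (\<psi> ^^ 2) ^^ l"
    by (simp only: funpow_mult)
  also have "\<psi> ^^ 2 = \<psi> \<circ> \<psi>"
    by (simp add: numeral_2_eq_2)
  also note l(2)
  finally have "\<psi> ^^ l \<circ> \<psi> ^^ l = id" .
  then show ?thesis
    using l(1) funpow_mem[OF assms(2)] funpow_image_swap[OF assms(3) \<psi>M] funpow_image_swap[OF \<psi>M assms(3)]
    by (metis (full_types))
qed

definition stable :: "'a set \<Rightarrow> bool" where
  "stable X \<longleftrightarrow> (\<forall>g\<in>G. g ` X \<subseteq> X)"

definition equivariant_matching_on :: "'a set \<Rightarrow> ('a \<Rightarrow> 'a) \<Rightarrow> bool" where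
  "equivariant_matching_on X \<mu> \<longleftrightarrow> X \<subseteq> W \<union> M \<and> (\<forall>x. x \<notin> X \<longrightarrow> \<mu> x = x)
     \<and> (\<forall>x\<in>X. \<mu> x \<in> X \<and> \<mu> (\<mu> x) = x \<and> (x \<in> W \<longleftrightarrow> \<mu> x \<in> M)) \<and> (\<forall>g\<in>G. \<mu> \<circ> g = g \<circ> \<mu>)"

text \<open>If \<open>a\<close> and \<open>b\<close> are matchable, the \<open>G\<close>-orbit of the edge \<open>{a, b}\<close> is a matching.\<close>

definition matchable :: "'a \<Rightarrow> 'a \<Rightarrow> bool" where
  "matchable a b \<longleftrightarrow> (\<forall>g\<in>G. g a = b \<longrightarrow> g b = a)"

definition pair_orbit :: "'a \<Rightarrow> 'a \<Rightarrow> 'a set" where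
  "pair_orbit a b = (\<lambda>g. g a) ` G \<union> (\<lambda>g. g b) ` G"

lemma stable_mem_iff:
  assumes "stable X" "g \<in> G"
  shows "g x \<in> X \<longleftrightarrow> x \<in> X"
  using assms inv_mem[OF assms(2)] unfolding stable_def by (metis image_subset_iff inv_cancel(2))

lemma stable_Diff: "stable X \<Longrightarrow> stable Y \<Longrightarrow> stable (X - Y)"
  using stable_mem_iff unfolding stable_def by blast

lemma stable_pair_orbit: "stable (pair_orbit a b)"
  unfolding stable_def pair_orbit_def by (auto simp: image_iff) (metis comp_apply comp_mem)+

lemma mem_pair_orbit: "a \<in> pair_orbit a b"
  unfolding pair_orbit_def using id_mem by (metis UnI1 id_apply image_eqI)

lemma pair_orbit_subset: "stable X \<Longrightarrow> a \<in> X \<Longrightarrow> b \<in> X \<Longrightarrow> pair_orbit a b \<subseteq> X"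
  unfolding stable_def pair_orbit_def by blast

lemma equivariant_matching_on_empty: "equivariant_matching_on {} id"
  by (simp add: equivariant_matching_on_def)

lemma equivariant_matching_on_card:
  assumes "equivariant_matching_on X \<mu>"
  shows "card (X \<inter> W) = card (X \<inter> M)"
proof (rule bij_betw_same_card[of \<mu>], rule bij_betw_byWitness[where f' = \<mu>])
  show "\<mu> ` (X \<inter> W) \<subseteq> X \<inter> M" "\<mu> ` (X \<inter> M) \<subseteq> X \<inter> W"
    using assms disjoint_sides unfolding equivariant_matching_on_def by blast+
qed (use assms in \<open>auto simp: equivariant_matching_on_def\<close>)

lemma equivariant_matching_on_Un:
  assumes X: "stable X" and XY: "X \<inter> Y = {}"
    and \<mu>: "equivariant_matching_on X \<mu>" and \<nu>: "equivariant_matching_on Y \<nu>"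
  shows "equivariant_matching_on (X \<union> Y) (\<lambda>x. if x \<in> X then \<mu> x else \<nu> x)"
    (is "equivariant_matching_on _ ?\<mu>")
proof -
  have "?\<mu> x \<in> X \<union> Y \<and> ?\<mu> (?\<mu> x) = x \<and> (x \<in> W \<longleftrightarrow> ?\<mu> x \<in> M)" if "x \<in> X \<union> Y" for x
  proof (cases "x \<in> X")
    case True
    then show ?thesis
      using \<mu> unfolding equivariant_matching_on_def by auto
  next
    case False
    then have "x \<in> Y"
      using that by blast
    then have "\<nu> x \<in> Y" "\<nu> x \<notin> X" "\<nu> (\<nu> x) = x" "x \<in> W \<longleftrightarrow> \<nu> x \<in> M"
      using \<nu> XY unfolding equivariant_matching_on_def by blast+
    then show ?thesis
      using False by simp
  qed
  moreover have "?\<mu> \<circ> g = g \<circ> ?\<mu>" if "g \<in> G" for g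
  proof
    fix x
    have "\<mu> \<circ> g = g \<circ> \<mu>" "\<nu> \<circ> g = g \<circ> \<nu>"
      using \<mu> \<nu> that unfolding equivariant_matching_on_def by blast+
    then have "\<mu> (g x) = g (\<mu> x)" "\<nu> (g x) = g (\<nu> x)"
      by (metis comp_apply)+
    then show "(?\<mu> \<circ> g) x = (g \<circ> ?\<mu>) x"
      using stable_mem_iff[OF X that, of x] by simp
  qed
  moreover have "X \<union> Y \<subseteq> W \<union> M" "\<forall>x. x \<notin> X \<union> Y \<longrightarrow> ?\<mu> x = x"
    using \<mu> \<nu> unfolding equivariant_matching_on_def by auto
  ultimately show ?thesis
    unfolding equivariant_matching_on_def by blast
qed

lemma equivariant_matching_on_Diff:
  assumes "Y \<subseteq> X" "equivariant_matching_on Y \<mu>" "card (X \<inter> W) = card (X \<inter> M)"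
  shows "card ((X - Y) \<inter> W) = card ((X - Y) \<inter> M)"
proof -
  have "card ((X - Y) \<inter> S) = card (X \<inter> S) - card (Y \<inter> S)" if "finite S" for S
  proof -
    have "(X - Y) \<inter> S = X \<inter> S - Y \<inter> S" "Y \<inter> S \<subseteq> X \<inter> S"
      using assms(1) by blast+
    then show ?thesis
      using that by (simp add: card_Diff_subset)
  qed
  then show ?thesis
    using assms(3) equivariant_matching_on_card[OF assms(2)] finite_W finite_M by simp
qed

lemma matchable_partner_exists:
  assumes "odd (card W)" "stable X" "card (X \<inter> W) = card (X \<inter> M)" and a: "a \<in> X \<inter> W"
  shows "\<exists>b\<in>X \<inter> M. matchable a b"
proof (cases "\<exists>\<psi>\<in>G. \<psi> ` W = M")
  case False
  then have "g ` W = W" if "g \<in> G" for g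
    using preserves_or_swaps[OF that] that by metis
  then have "matchable a b" if "b \<in> M" for b
    using a that disjoint_sides unfolding matchable_def by blast
  moreover have "X \<inter> M \<noteq> {}"
  proof
    assume "X \<inter> M = {}"
    then have "card (X \<inter> W) = 0"
      using assms(3) by simp
    then show False
      using a finite_W by (auto simp: card_eq_0_iff)
  qed
  ultimately show ?thesis
    by blast
next
  case True
  then obtain c where c: "c \<in> G" "c \<circ> c = id" "c ` W = M"
    using swap_involution_exists[OF assms(1)] by blast
  have "c a \<in> X \<inter> M"
    using a c(1,3) stable_mem_iff[OF assms(2)] by blast
  moreover have "g (c a) = a" if "g \<in> G" "g a = c a" for g
  proof -
    have "g = c"
      using eq_if_agree[OF that(1) c(1)] a that(2) by blast
    then show ?thesis
      using c(2) by (metis comp_apply id_apply)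
  qed
  ultimately show ?thesis
    unfolding matchable_def by blast
qed

definition in_edge_orbit :: "'a \<Rightarrow> 'a \<Rightarrow> 'a \<Rightarrow> 'a \<Rightarrow> bool" where
  "in_edge_orbit a b x y \<longleftrightarrow> (\<exists>g\<in>G. (x = g a \<and> y = g b) \<or> (x = g b \<and> y = g a))"

lemma in_edge_orbit_unique:
  assumes "a \<in> W" "b \<in> M" "matchable a b" "in_edge_orbit a b x y" "in_edge_orbit a b x y'"
  shows "y = y'"
proof -
  have cross: "g b = h a" if "g \<in> G" "h \<in> G" "g a = h b" for g h
  proof -
    have "(inv h \<circ> g) a = b"
      using that by simp
    then have "(inv h \<circ> g) b = a"
      using assms(3) that by (simp add: matchable_def comp_mem inv_mem del: comp_apply)
    then show ?thesis
      using that(2) by (metis comp_apply inv_cancel(1))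
  qed
  obtain g h where gh: "g \<in> G" "h \<in> G"
    and "(x = g a \<and> y = g b) \<or> (x = g b \<and> y = g a)" "(x = h a \<and> y' = h b) \<or> (x = h b \<and> y' = h a)"
    using assms(4,5) unfolding in_edge_orbit_def by blast
  then show ?thesis
    using eq_if_agree[OF gh] cross[OF gh] cross[OF gh(2,1)] assms(1,2) by auto
qed

lemma pair_orbit_matching:
  assumes a: "a \<in> W" and b: "b \<in> M" and ab: "matchable a b"
  shows "\<exists>\<mu>. equivariant_matching_on (pair_orbit a b) \<mu>"
proof -
  let ?E = "in_edge_orbit a b"
  have E_sym: "?E y x" if "?E x y" for x y
    using that unfolding in_edge_orbit_def by blast
  have E_act: "?E (h x) (h y)" if "?E x y" "h \<in> G" for x y h
    using that comp_mem unfolding in_edge_orbit_def by (metis comp_apply)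
  have E_sides: "(x \<in> W \<and> y \<in> M) \<or> (x \<in> M \<and> y \<in> W)" if "?E x y" for x y
    using that preserves_or_swaps a b unfolding in_edge_orbit_def by blast
  have orbit: "pair_orbit a b = {x. \<exists>y. ?E x y}"
    unfolding pair_orbit_def in_edge_orbit_def by blast
  define \<mu> where "\<mu> x = (if x \<in> pair_orbit a b then THE y. ?E x y else x)" for x
  have \<mu>_eq: "\<mu> x = y" if "?E x y" for x y
    using that in_edge_orbit_unique[OF a b ab] orbit unfolding \<mu>_def by (auto intro: the_equality)
  have \<mu>_E: "?E x (\<mu> x)" if "x \<in> pair_orbit a b" for x
    using that \<mu>_eq orbit by auto
  have "\<mu> \<circ> g = g \<circ> \<mu>" if "g \<in> G" for g
  proof
    fix x
    show "(\<mu> \<circ> g) x = (g \<circ> \<mu>) x"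
    proof (cases "x \<in> pair_orbit a b")
      case True
      then show ?thesis
        using \<mu>_eq[OF E_act[OF \<mu>_E that]] by simp
    next
      case False
      then show ?thesis
        using stable_mem_iff[OF stable_pair_orbit that] unfolding \<mu>_def by simp
    qed
  qed
  moreover have "\<mu> x \<in> pair_orbit a b \<and> \<mu> (\<mu> x) = x \<and> (x \<in> W \<longleftrightarrow> \<mu> x \<in> M)"
    if "x \<in> pair_orbit a b" for x
    using \<mu>_E[OF that] E_sym orbit \<mu>_eq E_sides disjoint_sides by blast
  moreover have "\<mu> x = x" if "x \<notin> pair_orbit a b" for x
    using that by (simp add: \<mu>_def)
  moreover have "pair_orbit a b \<subseteq> W \<union> M"
    using E_sides orbit by blast
  ultimately have "equivariant_matching_on (pair_orbit a b) \<mu>"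
    unfolding equivariant_matching_on_def by blast
  then show ?thesis
    by blast
qed

lemma stable_equivariant_matching_exists:
  assumes "odd (card W)"
  shows "stable X \<Longrightarrow> X \<subseteq> W \<union> M \<Longrightarrow> card (X \<inter> W) = card (X \<inter> M)
    \<Longrightarrow> \<exists>\<mu>. equivariant_matching_on X \<mu>"
proof (induction "card X" arbitrary: X rule: less_induct)
  case less
  show ?case
  proof (cases "X \<inter> W = {}")
    case True
    then have "X \<inter> M = {}"
      using less.prems(3) finite_M by simp
    then have "X = {}"
      using True less.prems(2) by blast
    then show ?thesis
      using equivariant_matching_on_empty by blast
  next
    case False
    then obtain a where a: "a \<in> X \<inter> W"
      by blast
    then obtain b where b: "b \<in> X \<inter> M" "matchable a b"
      using matchable_partner_exists[OF assms less.prems(1,3)] by blast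
    let ?O = "pair_orbit a b"
    obtain \<mu> where \<mu>: "equivariant_matching_on ?O \<mu>"
      using pair_orbit_matching a b by blast
    have O: "?O \<subseteq> X"
      using pair_orbit_subset[OF less.prems(1)] a b by blast
    have "finite X"
      using less.prems(2) finite_W finite_M finite_subset by blast
    then have "card (X - ?O) < card X"
      using a mem_pair_orbit by (intro psubset_card_mono) auto
    then obtain \<nu> where \<nu>: "equivariant_matching_on (X - ?O) \<nu>"
      using less.hyps[of "X - ?O"] less.prems stable_Diff stable_pair_orbit
        equivariant_matching_on_Diff[OF O \<mu>] by blast
    have "equivariant_matching_on (?O \<union> (X - ?O)) (\<lambda>x. if x \<in> ?O then \<mu> x else \<nu> x)"
      by (rule equivariant_matching_on_Un[OF stable_pair_orbit _ \<mu> \<nu>]) blast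
    then show ?thesis
      using O by (metis Un_Diff_cancel Un_absorb1)
  qed
qed

lemma equivariant_matching_exists:
  assumes "odd (card W)" "card W = card M"
  shows "\<exists>\<mu>. equivariant_matching_on (W \<union> M) \<mu>"
proof -
  have "stable (W \<union> M)"
    unfolding stable_def using permutes_sides permutes_image by blast
  moreover have "(W \<union> M) \<inter> W = W" "(W \<union> M) \<inter> M = M"
    by auto
  ultimately show ?thesis
    using stable_equivariant_matching_exists assms by simp
qed

lemma equivariant_matching_on_sides:
  assumes "equivariant_matching_on (W \<union> M) \<mu>"
  shows "\<mu> permutes (W \<union> M)" "\<mu> ` W = M" "\<mu> ` M = W" "g \<in> G \<Longrightarrow> g \<circ> \<mu> \<circ> inv g = \<mu>"
proof -
  have \<mu>: "\<forall>x. x \<notin> W \<union> M \<longrightarrow> \<mu> x = x" "\<forall>x\<in>W \<union> M. \<mu> x \<in> W \<union> M \<and> \<mu> (\<mu> x) = x"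
    "\<forall>x\<in>W. \<mu> x \<in> M" "\<forall>x\<in>M. \<mu> x \<in> W" "\<forall>g\<in>G. \<mu> \<circ> g = g \<circ> \<mu>"
    using assms disjoint_sides unfolding equivariant_matching_on_def by blast+
  have "inj_on \<mu> (W \<union> M)"
    by (metis \<mu>(2) inj_onI)
  then show "\<mu> permutes (W \<union> M)"
    using \<mu>(1,2) finite_W finite_M by (intro inj_imp_permutes) auto
  show "\<mu> ` W = M" "\<mu> ` M = W"
    using \<mu>(2-4) by (auto intro: rev_image_eqI)
  show "g \<circ> \<mu> \<circ> inv g = \<mu>" if "g \<in> G"
    using \<mu>(5) that by (metis comp_id inv_cancel(3) o_assoc)
qed

end

section \<open>Preference profiles and the group \<open>G\<^sup>*\<close>\<close>

lemma women_men_disjoint: "women n \<inter> men n = {}"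
  by (auto simp: women_def men_def)

lemma agents_eq: "agents n = women n \<union> men n"
  by (simp add: agents_def)

lemma finite_women: "finite (women n)" and finite_men: "finite (men n)"
  by (simp_all add: women_def men_def)

lemma card_women: "card (women n) = n" and card_men: "card (men n) = n"
  by (simp_all add: women_def men_def)

lemma Gstar_iff:
  assumes "n \<ge> 1"
  shows "\<phi> \<in> Gstar n \<longleftrightarrow> \<phi> permutes agents n \<and>
    ((\<phi> ` women n = women n \<and> \<phi> ` men n = men n) \<or> (\<phi> ` women n = men n \<and> \<phi> ` men n = women n))"
proof -
  have "women n \<noteq> men n"
    using assms women_men_disjoint[of n] by (auto simp: women_def)
  then show ?thesis
    unfolding Gstar_def by (auto simp: doubleton_eq_iff)
qed

lemma rel_act_comp: "bij \<phi> \<Longrightarrow> bij \<psi> \<Longrightarrow> rel_act (\<phi> \<circ> \<psi>) R = rel_act \<phi> (rel_act \<psi> R)"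
  by (simp add: rel_act_def o_inv_distrib)

lemma profile_act_comp:
  "bij \<phi> \<Longrightarrow> bij \<psi> \<Longrightarrow> profile_act (\<phi> \<circ> \<psi>) p = profile_act \<phi> (profile_act \<psi> p)"
  by (simp add: profile_act_def rel_act_comp o_inv_distrib)

lemma profile_act_id: "profile_act id p = p"
  by (simp add: profile_act_def rel_act_def)

lemma perm_conj_id: "perm_conj id \<mu> = \<mu>"
  by (simp add: perm_conj_def)

lemma perm_conj_comp: "bij \<phi> \<Longrightarrow> bij \<psi> \<Longrightarrow> perm_conj (\<phi> \<circ> \<psi>) \<mu> = perm_conj \<phi> (perm_conj \<psi> \<mu>)"
  by (simp add: perm_conj_def o_inv_distrib o_assoc)

lemma perm_group_Gstar:
  assumes "n \<ge> 1"
  shows "perm_group (Gstar n)"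
proof
  show "id \<in> Gstar n"
    using assms by (simp add: Gstar_iff)
next
  fix \<phi> \<psi> assume "\<phi> \<in> Gstar n" "\<psi> \<in> Gstar n"
  then show "\<phi> \<circ> \<psi> \<in> Gstar n"
    using assms permutes_compose unfolding Gstar_iff[OF assms] image_comp[symmetric] by metis
next
  fix \<phi> assume \<phi>: "\<phi> \<in> Gstar n"
  then have "\<phi> permutes agents n"
    using assms Gstar_iff by blast
  then show "bij \<phi>"
    by (rule permutes_bij)
  have "inv \<phi> ` (\<phi> ` A) = A" for A
    using \<open>bij \<phi>\<close> by (simp add: bij_is_inj image_inv_f_f)
  then show "inv \<phi> \<in> Gstar n"
    using \<phi> permutes_inv[OF \<open>\<phi> permutes agents n\<close>] unfolding Gstar_iff[OF assms] by metis
qed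

lemma perm_group_action_profile_act:
  assumes "n \<ge> 1"
  shows "perm_group_action (Gstar n) profile_act"
proof -
  interpret perm_group "Gstar n"
    by (rule perm_group_Gstar[OF assms])
  show ?thesis
    by unfold_locales (simp_all add: profile_act_id profile_act_comp bij_mem)
qed

lemma perm_group_action_perm_conj:
  assumes "n \<ge> 1"
  shows "perm_group_action (Gstar n) perm_conj"
proof -
  interpret perm_group "Gstar n"
    by (rule perm_group_Gstar[OF assms])
  show ?thesis
    by unfold_locales (simp_all add: perm_conj_id perm_conj_comp bij_mem)
qed

definition other_side :: "nat \<Rightarrow> nat \<Rightarrow> nat set" where
  "other_side n z = (if z \<in> women n then men n else women n)"

lemma profiles_iff:
  "p \<in> profiles n \<longleftrightarrow>
     (\<forall>z\<in>agents n. linear_order_on (other_side n z) (p z)) \<and> (\<forall>z. z \<notin> agents n \<longrightarrow> p z = {})"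
  using women_men_disjoint[of n] unfolding profiles_def other_side_def agents_eq by auto

lemma Gstar_other_side:
  assumes "n \<ge> 1" "\<phi> \<in> Gstar n" "z \<in> agents n"
  shows "\<phi> ` other_side n z = other_side n (\<phi> z)"
  using assms women_men_disjoint[of n] unfolding Gstar_iff[OF assms(1)] other_side_def agents_eq
  by (auto 4 3)

lemma rel_act_eq_dir_image: "bij \<phi> \<Longrightarrow> rel_act \<phi> R = dir_image R \<phi>"
  unfolding rel_act_def dir_image_def
  by (auto simp: bij_is_surj surj_f_inv_f bij_is_inj) (metis bij_inv_eq_iff)

lemma rel_act_linear_order_on:
  assumes "bij \<phi>" "linear_order_on A R"
  shows "linear_order_on (\<phi> ` A) (rel_act \<phi> R)"
proof -
  have "Field R = A"
    using assms(2) unfolding order_on_defs refl_on_def Field_def by blast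
  then show ?thesis
    using Linear_order_dir_image[of R \<phi>] dir_image_Field[of R \<phi>] assms
      inj_on_subset[OF bij_is_inj[OF assms(1)] subset_UNIV]
    by (simp add: rel_act_eq_dir_image)
qed

lemma profile_act_mem_profiles:
  assumes n: "n \<ge> 1" and p: "p \<in> profiles n" and \<phi>: "\<phi> \<in> Gstar n"
  shows "profile_act \<phi> p \<in> profiles n"
proof -
  have perm: "\<phi> permutes agents n" "bij \<phi>"
    using \<phi> Gstar_iff[OF n] permutes_bij by auto
  have "linear_order_on (other_side n z) (profile_act \<phi> p z)" if z: "z \<in> agents n" for z
  proof -
    let ?y = "inv \<phi> z"
    have y: "?y \<in> agents n" "\<phi> ?y = z"
      using z perm(1) by (simp_all add: permutes_inv permutes_in_image permutes_inverses)
    then have "linear_order_on (\<phi> ` other_side n ?y) (rel_act \<phi> (p ?y))"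
      using p perm(2) rel_act_linear_order_on unfolding profiles_iff by blast
    then show ?thesis
      using Gstar_other_side[OF n \<phi> y(1)] y(2) by (simp add: profile_act_def)
  qed
  moreover have "profile_act \<phi> p z = {}" if "z \<notin> agents n" for z
    using that p permutes_not_in[OF permutes_inv[OF perm(1)] that] unfolding profiles_iff
    by (simp add: profile_act_def rel_act_def)
  ultimately show ?thesis
    unfolding profiles_iff by blast
qed

lemma perm_conj_mem_matchings:
  assumes n: "n \<ge> 1" and \<mu>: "\<mu> \<in> matchings n" and \<phi>: "\<phi> \<in> Gstar n"
  shows "perm_conj \<phi> \<mu> \<in> matchings n"
proof -
  have perm: "\<phi> permutes agents n"
    using \<phi> Gstar_iff[OF n] by blast
  have "perm_conj \<phi> \<mu> permutes agents n"
    using \<mu> perm unfolding perm_conj_def matchings_def by (blast intro: permutes_compose permutes_inv)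
  moreover have "perm_conj \<phi> \<mu> ` women n = men n \<and> perm_conj \<phi> \<mu> ` men n = women n"
  proof -
    have conj_image: "perm_conj \<phi> \<mu> ` (\<phi> ` A) = \<phi> ` \<mu> ` A" for A
      using perm by (simp add: perm_conj_def image_image permutes_inverses)
    have "\<mu> ` women n = men n" "\<mu> ` men n = women n"
      using \<mu> unfolding matchings_def by blast+
    moreover have "(\<phi> ` women n = women n \<and> \<phi> ` men n = men n) \<or> (\<phi> ` women n = men n \<and> \<phi> ` men n = women n)"
      using \<phi> unfolding Gstar_iff[OF n] by blast
    ultimately show ?thesis
      using conj_image[of "women n"] conj_image[of "men n"] by (elim disjE conjE) simp_all
  qed
  moreover have "perm_conj \<phi> \<mu> (perm_conj \<phi> \<mu> z) = z" if "z \<in> agents n" for z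
  proof -
    have "inv \<phi> z \<in> agents n"
      using that perm by (simp add: permutes_inv permutes_in_image)
    then show ?thesis
      using \<mu> perm unfolding perm_conj_def matchings_def by (simp add: permutes_inverses)
  qed
  ultimately show ?thesis
    unfolding matchings_def by blast
qed

definition stabilizer :: "nat \<Rightarrow> profile \<Rightarrow> (nat \<Rightarrow> nat) set" where
  "stabilizer n p = {\<phi> \<in> Gstar n. profile_act \<phi> p = p}"

lemma stabilizer_fixes_other_side:
  assumes n: "n \<ge> 1" and p: "p \<in> profiles n" and \<phi>: "\<phi> \<in> stabilizer n p"
    and y: "y \<in> agents n" "\<phi> y = y" and a: "a \<in> other_side n y"
  shows "\<phi> a = a"
proof -
  have G: "\<phi> \<in> Gstar n" and stab: "profile_act \<phi> p = p"
    using \<phi> by (simp_all add: stabilizer_def)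
  then have "bij \<phi>"
    using Gstar_iff[OF n] permutes_bij by auto
  then have "inv \<phi> y = y"
    using y(2) inv_f_f[OF bij_is_inj[OF \<open>bij \<phi>\<close>], of y] by simp
  then have "rel_act \<phi> (p y) = p y"
    using fun_cong[OF stab, of y] by (simp add: profile_act_def)
  moreover have "(\<phi> b, \<phi> c) \<in> rel_act \<phi> R \<longleftrightarrow> (b, c) \<in> R" for b c R
    using \<open>bij \<phi>\<close> by (simp add: rel_act_def bij_is_inj)
  ultimately have pres: "(\<phi> b, \<phi> c) \<in> p y \<longleftrightarrow> (b, c) \<in> p y" for b c
    by metis
  have "\<phi> ` other_side n y = other_side n y"
    using Gstar_other_side[OF n G y(1)] y(2) by simp
  moreover have "linear_order_on (other_side n y) (p y)" "finite (other_side n y)"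
    using p y(1) unfolding profiles_iff other_side_def by (auto simp: finite_women finite_men)
  ultimately show ?thesis
    using linear_order_on_automorphism_fixes[OF _ _ _ pres a] by blast
qed

lemma stabilizer_free:
  assumes n: "n \<ge> 1" and p: "p \<in> profiles n" and \<phi>: "\<phi> \<in> stabilizer n p"
    and x: "x \<in> agents n" "\<phi> x = x"
  shows "\<phi> = id"
proof -
  have "other_side n x \<noteq> {}"
    using n by (simp add: other_side_def women_def men_def)
  then obtain z where z: "z \<in> other_side n x"
    by blast
  then have "z \<in> agents n" "\<phi> z = z"
    using stabilizer_fixes_other_side[OF n p \<phi> x] by (auto simp: other_side_def agents_eq split: if_splits)
  then have "\<phi> a = a" if "a \<in> other_side n x \<union> other_side n z" for a
    using that stabilizer_fixes_other_side[OF n p \<phi>] x by blast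
  moreover have "other_side n x \<union> other_side n z = agents n"
    using z women_men_disjoint[of n] by (auto simp: other_side_def agents_eq split: if_splits)
  moreover have "\<phi> permutes agents n"
    using \<phi> n Gstar_iff unfolding stabilizer_def by blast
  ultimately show ?thesis
    by (metis eq_id_iff permutes_not_in)
qed

lemma free_bipartite_action_stabilizer:
  assumes n: "n \<ge> 1" and p: "p \<in> profiles n"
  shows "free_bipartite_action (stabilizer n p) (women n) (men n)"
proof (rule free_bipartite_action.intro)
  show "perm_group (stabilizer n p)"
    using perm_group_action.perm_group_stabilizer[OF perm_group_action_profile_act[OF n]]
    by (simp add: stabilizer_def)
  show "free_bipartite_action_axioms (stabilizer n p) (women n) (men n)"
  proof
    fix \<phi> assume \<phi>: "\<phi> \<in> stabilizer n p"
    show "\<phi> permutes (women n \<union> men n)"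
      "(\<phi> ` women n = women n \<and> \<phi> ` men n = men n) \<or> (\<phi> ` women n = men n \<and> \<phi> ` men n = women n)"
      using \<phi> Gstar_iff[OF n] by (auto simp: stabilizer_def agents_eq)
    show "\<phi> = id" if "x \<in> women n \<union> men n" "\<phi> x = x" for x
      using stabilizer_free[OF n p \<phi>] that by (simp add: agents_eq)
  qed (simp_all add: finite_women finite_men women_men_disjoint)
qed

lemma stabilizer_invariant_matching_exists:
  assumes "odd n" and p: "p \<in> profiles n"
  shows "\<exists>\<mu>\<in>matchings n. \<forall>\<phi>\<in>Gstar n. profile_act \<phi> p = p \<longrightarrow> perm_conj \<phi> \<mu> = \<mu>"
proof -
  have n: "n \<ge> 1"
    using \<open>odd n\<close> by presburger
  interpret free_bipartite_action "stabilizer n p" "women n" "men n"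
    using free_bipartite_action_stabilizer[OF n p] .
  obtain \<mu> where \<mu>: "equivariant_matching_on (women n \<union> men n) \<mu>"
    using equivariant_matching_exists \<open>odd n\<close> by (auto simp: card_women card_men)
  then have "\<forall>z\<in>agents n. \<mu> (\<mu> z) = z"
    unfolding equivariant_matching_on_def agents_eq by blast
  then have "\<mu> \<in> matchings n"
    using equivariant_matching_on_sides(1-3)[OF \<mu>] by (simp add: matchings_def agents_eq)
  moreover have "perm_conj \<phi> \<mu> = \<mu>" if "\<phi> \<in> Gstar n" "profile_act \<phi> p = p" for \<phi>
    using equivariant_matching_on_sides(4)[OF \<mu>] that by (simp add: perm_conj_def stabilizer_def)
  ultimately show ?thesis
    by blast
qed

theorem theorem3:
  fixes n :: nat
  assumes "n \<ge> 2" and "odd n"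
  shows "\<exists>F. mechanism n F \<and> resolute n F \<and> symmetric_mech n F"
proof -
  have n: "n \<ge> 1"
    using assms(1) by simp
  obtain f where f: "\<forall>p\<in>profiles n. f p \<in> matchings n \<and>
      (\<forall>\<phi>\<in>Gstar n. f (profile_act \<phi> p) = perm_conj \<phi> (f p))"
    using perm_group_action.equivariant_map_exists[OF perm_group_action_profile_act[OF n]
        perm_group_action_perm_conj[OF n] profile_act_mem_profiles[OF n]
        perm_conj_mem_matchings[OF n] stabilizer_invariant_matching_exists[OF assms(2)]]
    by blast
  then have "mechanism n (\<lambda>p. {f p}) \<and> resolute n (\<lambda>p. {f p}) \<and> symmetric_mech n (\<lambda>p. {f p})"
    unfolding mechanism_def resolute_def symmetric_mech_def U_symmetric_def by simp
  then show ?thesis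
    by blast
qed

end
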